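(* Let $n,k,r$ be integers with $k,r\geq 2$ and $n\geq k+r$, and let $H$ be a vertex-$k$-maximal $r$-uniform hypergraph on $n$ vertices with a separation triple $(S,H_1,H_2)$. Let $e$ be an $r$-subset of $V(H_1)$ or of $V(H_2)$ with $e\notin E(H)$. Then every subhypergraph $H'$ of $H+e$ with $\kappa(H')\geq k+1$ satisfies $V(H')\subseteq V(H_1)$ or $V(H')\subseteq V(H_2)$; i.e. $H'$ is a subhypergraph of $H_1+e$ or of $H_2+e$ (where $H_i+e$ is $H_i$ with $e$ added whenever $e\subseteq V(H_i)$). Moreover, if for some $i\in\{1,2\}$ we have $e\subseteq V(H_i)$ and $e\not\subseteq S$, then $H'$ is a subhypergraph of $H_i+e$.
   Context: A hypergraph $H=(V,E)$ consists of a finite vertex set $V$ and a set $E$ of non-empty subsets of $V$ (edges). $H$ is $r$-uniform if every edge has exactly $r$ elements. The complement $H^c$ of an $r$-uniform hypergraph $H=(V,E)$ is the $r$-uniform hypergraph on $V$ whose edges are the $r$-subsets of $V$ not in $E$. A subhypergraph of $H$ is $H'=(V',E')$ with $V'\subseteq V$, $E'\subseteq E$. For an $r$-subset $e\in E(H^c)$, $H+e=(V,E\cup\{e\})$. For $Y\subseteq V$, $H[Y]$ is the induced hypergraph with vertex set $Y$ and edges $\{e\in E: e\subseteq Y\}$, and $H-Y=H[V\setminus Y]$. A path is an alternating sequence $v_1,e_1,\dots,e_s,v_{s+1}$ of distinct vertices and distinct edges with $v_i,v_{i+1}\in e_i$; connectedness and components are defined via paths. A vertex-cut is a set $X\subseteq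 V$ with $H-X$ disconnected. The vertex-connectivity $\kappa(H)$ is the minimum size of a vertex-cut if one exists, and $|V(H)|-1$ otherwise. $\overline{\kappa}(H)=\max\{\kappa(H'): H'\text{ a subhypergraph of }H\}$. An $r$-uniform hypergraph $H$ is vertex-$k$-maximal if $\overline{\kappa}(H)\leq k$ but $\overline{\kappa}(H+e)\geq k+1$ for every $e\in E(H^c)$. For a vertex-$k$-maximal $r$-uniform $H$ with $|V(H)|\geq k+r$ (so $\kappa(H)=k$ and $H$ has vertex-cuts), a separation triple $(S,H_1,H_2)$ is obtained by taking a minimum vertex-cut $S$ (so $|S|=k$), a component $C_1$ of $H-S$, letting $C_2=H-(S\cup V(C_1))$, $H_1=H[S\cup V(C_1)]$ and $H_2=H[S\cup V(C_2)]$. *)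

theory Defs
  imports Main
begin

type_synonym 'a hypergraph = "'a set \<times> 'a set set"

definition verts :: "'a hypergraph \<Rightarrow> 'a set" where "verts H = fst H"
definition edges :: "'a hypergraph \<Rightarrow> 'a set set" where "edges H = snd H"

definition hypergraph :: "'a hypergraph \<Rightarrow> bool" where
  "hypergraph H \<longleftrightarrow> finite (verts H) \<and> (\<forall>e\<in>edges H. e \<noteq> {} \<and> e \<subseteq> verts H)"

definition uniform :: "nat \<Rightarrow> 'a hypergraph \<Rightarrow> bool" where
  "uniform r H \<longleftrightarrow> hypergraph H \<and> (\<forall>e\<in>edges H. card e = r)"

definition co_edges :: "nat \<Rightarrow> 'a hypergraph \<Rightarrow> 'a set set" where
  "co_edges r H = {e. e \<subseteq> verts H \<and> card e = r \<and> e \<notin> edges H}"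

definition add_edge :: "'a hypergraph \<Rightarrow> 'a set \<Rightarrow> 'a hypergraph" where
  "add_edge H e = (verts H, insert e (edges H))"

definition add_edge_if :: "'a hypergraph \<Rightarrow> 'a set \<Rightarrow> 'a hypergraph" where
  "add_edge_if H e = (if e \<subseteq> verts H then add_edge H e else H)"

definition subhypergraph :: "'a hypergraph \<Rightarrow> 'a hypergraph \<Rightarrow> bool" where
  "subhypergraph H' H \<longleftrightarrow> hypergraph H' \<and> verts H' \<subseteq> verts H \<and> edges H' \<subseteq> edges H"

definition induced :: "'a hypergraph \<Rightarrow> 'a set \<Rightarrow> 'a hypergraph" where
  "induced H Y = (Y, {e\<in>edges H. e \<subseteq> Y})"

definition delete :: "'a hypergraph \<Rightarrow> 'a set \<Rightarrow> 'a hypergraph" where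
  "delete H Y = induced H (verts H - Y)"

definition is_path :: "'a hypergraph \<Rightarrow> 'a list \<Rightarrow> 'a set list \<Rightarrow> bool" where
  "is_path H vs es \<longleftrightarrow> length vs = Suc (length es) \<and> distinct vs \<and> distinct es
     \<and> set vs \<subseteq> verts H \<and> set es \<subseteq> edges H
     \<and> (\<forall>i < length es. vs ! i \<in> es ! i \<and> vs ! Suc i \<in> es ! i)"

definition joined :: "'a hypergraph \<Rightarrow> 'a \<Rightarrow> 'a \<Rightarrow> bool" where
  "joined H u v \<longleftrightarrow> (\<exists>vs es. is_path H vs es \<and> hd vs = u \<and> last vs = v)"

definition connected :: "'a hypergraph \<Rightarrow> bool" where
  "connected H \<longleftrightarrow> (\<forall>u\<in>verts H. \<forall>v\<in>verts H. joined H u v)"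

definition vertex_cut :: "'a hypergraph \<Rightarrow> 'a set \<Rightarrow> bool" where
  "vertex_cut H X \<longleftrightarrow> X \<subseteq> verts H \<and> \<not> connected (delete H X)"

definition kappa :: "'a hypergraph \<Rightarrow> nat" where
  "kappa H = (if \<exists>X. vertex_cut H X then Min {card X | X. vertex_cut H X}
              else card (verts H) - 1)"

definition kappa_bar :: "'a hypergraph \<Rightarrow> nat" where
  "kappa_bar H = Max {kappa H' | H'. subhypergraph H' H}"

definition vertex_k_maximal :: "nat \<Rightarrow> nat \<Rightarrow> 'a hypergraph \<Rightarrow> bool" where
  "vertex_k_maximal k r H \<longleftrightarrow> uniform r H \<and> kappa_bar H \<le> k
     \<and> (\<forall>e\<in>co_edges r H. kappa_bar (add_edge H e) \<ge> k + 1)"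

definition component_verts :: "'a hypergraph \<Rightarrow> 'a set \<Rightarrow> bool" where
  "component_verts H C \<longleftrightarrow> (\<exists>v\<in>verts H. C = {u\<in>verts H. joined H v u})"

definition min_vertex_cut :: "'a hypergraph \<Rightarrow> 'a set \<Rightarrow> bool" where
  "min_vertex_cut H S \<longleftrightarrow> vertex_cut H S \<and> (\<forall>X. vertex_cut H X \<longrightarrow> card S \<le> card X)"

definition separation_triple ::
  "'a hypergraph \<Rightarrow> 'a set \<Rightarrow> 'a hypergraph \<Rightarrow> 'a hypergraph \<Rightarrow> bool" where
  "separation_triple H S H1 H2 \<longleftrightarrow> min_vertex_cut H S \<and>
     (\<exists>C1. component_verts (delete H S) C1 \<and>
        H1 = induced H (S \<union> C1) \<and>
        H2 = induced H (S \<union> (verts H - (S \<union> C1))))"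

end

theory Submission
  imports Defs
begin

(* A subhypergraph H' of H + e with kappa H' > k cannot lie inside H, since kappa_bar H \<le> k;
   hence it contains e.  Every edge of H' avoiding S stays on one side of the component C1 (for e
   this is the hypothesis that e lies in V(H1) or V(H2)), so if H' had vertices strictly on both
   sides, S \<inter> V(H') would be a vertex cut of H' of size at most |S| = kappa H \<le> k. *)

lemma verts_induced [simp]: "verts (induced G Y) = Y"
  by (simp add: induced_def verts_def)

lemma edges_induced [simp]: "edges (induced G Y) = {f \<in> edges G. f \<subseteq> Y}"
  by (simp add: induced_def edges_def)

lemma verts_delete [simp]: "verts (delete G Y) = verts G - Y"
  by (simp add: delete_def)

lemma edges_delete [simp]: "edges (delete G Y) = {f \<in> edges G. f \<subseteq> verts G - Y}"
  by (simp add: delete_def)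

lemma verts_add_edge [simp]: "verts (add_edge G e) = verts G"
  by (simp add: add_edge_def verts_def)

lemma edges_add_edge [simp]: "edges (add_edge G e) = insert e (edges G)"
  by (simp add: add_edge_def edges_def)

lemma hypergraph_delete: "hypergraph G \<Longrightarrow> hypergraph (delete G Y)"
  by (auto simp: hypergraph_def)

lemma is_path_take:
  assumes "is_path G vs es" "m < length vs"
  shows "is_path G (take (Suc m) vs) (take m es)"
  using assms unfolding is_path_def by (auto dest: in_set_takeD)

lemma is_path_take_snoc:
  assumes p: "is_path G vs es" and i: "i < length vs" and f: "f \<in> edges G" "vs ! i \<in> f"
    and y: "y \<in> f" "y \<in> verts G" "y \<notin> set vs"
    and fn: "f \<notin> set (take i es)"
  shows "is_path G (take (Suc i) vs @ [y]) (take i es @ [f])"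
proof -
  have len: "length vs = Suc (length es)" using p by (simp add: is_path_def)
  have "is_path G (take (Suc i) vs) (take i es)" using is_path_take[OF p i] .
  then show ?thesis using p i f y fn len unfolding is_path_def
    by (auto simp: nth_append min_def less_Suc_eq dest: in_set_takeD)
qed

lemma first_unused_edge_index:
  assumes p: "is_path G vs es" and x: "x \<in> set vs" "x \<in> f"
  obtains j where "j < length vs" "vs ! j \<in> f" "f \<notin> set (take j es)"
proof (cases "f \<in> set es")
  case True
  then obtain j where j: "j < length es" "es ! j = f" by (auto simp: in_set_conv_nth)
  have "f \<notin> set (take j es)"
    using j p by (auto simp: is_path_def in_set_conv_nth nth_eq_iff_index_eq)
  then show ?thesis using that[of j] j p by (auto simp: is_path_def)
next
  case False
  obtain i where "i < length vs" "vs ! i = x" using x by (auto simp: in_set_conv_nth)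
  then show ?thesis using that False x by (auto dest: in_set_takeD)
qed

lemma joined_via_edge:
  assumes p: "is_path G vs es" and x: "x \<in> set vs" "x \<in> f" and f: "f \<in> edges G"
    and y: "y \<in> f" "y \<in> verts G"
  shows "joined G (hd vs) y"
proof -
  have ne: "vs \<noteq> []" using p by (auto simp: is_path_def)
  show ?thesis
  proof (cases "y \<in> set vs")
    case True
    then obtain m where m: "m < length vs" "vs ! m = y" by (auto simp: in_set_conv_nth)
    have "hd (take (Suc m) vs) = hd vs" using ne by (cases vs) auto
    moreover have "last (take (Suc m) vs) = y" using m by (simp add: take_Suc_conv_app_nth)
    ultimately show ?thesis using is_path_take[OF p m(1)] unfolding joined_def by metis
  next
    case False
    obtain j where j: "j < length vs" "vs ! j \<in> f" "f \<notin> set (take j es)"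
      using first_unused_edge_index[OF p x] .
    have "hd (take (Suc j) vs @ [y]) = hd vs" using ne by (cases vs) auto
    then show ?thesis
      using is_path_take_snoc[OF p j(1) f j(2) y False j(3)] unfolding joined_def by fastforce
  qed
qed

lemma is_path_last_mem_if_edges_split:
  assumes p: "is_path G vs es" and A: "\<forall>f\<in>edges G. f \<subseteq> A \<or> f \<inter> A = {}"
    and h: "hd vs \<in> A"
  shows "last vs \<in> A"
proof -
  have len: "length vs = Suc (length es)" and es: "set es \<subseteq> edges G"
    and adj: "\<forall>i < length es. vs ! i \<in> es ! i \<and> vs ! Suc i \<in> es ! i"
    using p by (auto simp: is_path_def)
  have "vs ! i \<in> A" if "i < length vs" for i
    using that
  proof (induction i)
    case 0
    then show ?case using h by (simp add: hd_conv_nth)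
  next
    case (Suc i)
    then have "es ! i \<in> edges G" "vs ! i \<in> es ! i" "vs ! Suc i \<in> es ! i" "vs ! i \<in> A"
      using len es adj by auto
    then show ?case using A by blast
  qed
  moreover have "vs \<noteq> []" using len by auto
  ultimately show ?thesis using len by (simp add: last_conv_nth)
qed

lemma component_verts_edge_split:
  assumes G: "hypergraph G" and C: "component_verts G C" and f: "f \<in> edges G"
  shows "f \<subseteq> C \<or> f \<inter> C = {}"
proof (rule disjCI)
  assume "f \<inter> C \<noteq> {}"
  then obtain x where x: "x \<in> f" "x \<in> C" by blast
  obtain v where C_def: "C = {u \<in> verts G. joined G v u}"
    using C by (auto simp: component_verts_def)
  obtain vs es where p: "is_path G vs es" "hd vs = v" "last vs = x"
    using x C_def by (auto simp: joined_def)
  have "x \<in> set vs" using p by (auto simp: is_path_def intro: last_in_set)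
  moreover have "f \<subseteq> verts G" using G f by (auto simp: hypergraph_def)
  ultimately show "f \<subseteq> C"
    using joined_via_edge[OF p(1) _ x(1) f] p(2) C_def by auto
qed

lemma finite_vertex_cut_cards:
  assumes "hypergraph G"
  shows "finite {card X | X. vertex_cut G X}"
proof -
  have "{card X | X. vertex_cut G X} \<subseteq> card ` Pow (verts G)"
    by (auto simp: vertex_cut_def)
  then show ?thesis using assms by (meson hypergraph_def finite_Pow_iff finite_imageI finite_subset)
qed

lemma kappa_le_card_vertex_cut:
  assumes "hypergraph G" "vertex_cut G X"
  shows "kappa G \<le> card X"
  using assms finite_vertex_cut_cards[OF assms(1)] by (auto simp: kappa_def intro: Min_le)

lemma kappa_eq_card_min_vertex_cut:
  assumes "hypergraph G" "min_vertex_cut G S"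
  shows "kappa G = card S"
  using assms finite_vertex_cut_cards[OF assms(1)]
  by (auto simp: kappa_def min_vertex_cut_def intro!: Min_eqI)

lemma kappa_le_card_verts:
  assumes "hypergraph G"
  shows "kappa G \<le> card (verts G)"
proof (cases "\<exists>X. vertex_cut G X")
  case True
  then obtain X where X: "vertex_cut G X" by blast
  have "card X \<le> card (verts G)"
    using X assms by (intro card_mono) (auto simp: vertex_cut_def hypergraph_def)
  then show ?thesis using kappa_le_card_vertex_cut[OF assms X] by simp
qed (simp add: kappa_def)

lemma kappa_le_kappa_bar:
  assumes "hypergraph H" "subhypergraph G H"
  shows "kappa G \<le> kappa_bar H"
proof -
  have "kappa H' \<le> card (verts H)" if "subhypergraph H' H" for H'
    using kappa_le_card_verts[of H'] card_mono[of "verts H" "verts H'"] that assms(1)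
    by (auto simp: subhypergraph_def hypergraph_def)
  then have "finite {kappa H' | H'. subhypergraph H' H}"
    by (auto intro: finite_subset[of _ "{..card (verts H)}"])
  moreover have "kappa G \<in> {kappa H' | H'. subhypergraph H' H}" using assms(2) by blast
  ultimately show ?thesis unfolding kappa_bar_def by (rule Max_ge)
qed

lemma kappa_le_card_if_edges_split:
  assumes G: "hypergraph G" and S: "finite S"
    and split: "\<forall>f\<in>edges G. f \<inter> S = {} \<longrightarrow> f \<subseteq> C \<or> f \<inter> C = {}"
    and u: "u \<in> verts G - S" "u \<in> C" and w: "w \<in> verts G - S" "w \<notin> C"
  shows "kappa G \<le> card S"
proof -
  define X where "X = S \<inter> verts G"
  have "\<not> connected (delete G X)"
  proof
    assume "connected (delete G X)"
    moreover have "u \<in> verts (delete G X)" "w \<in> verts (delete G X)"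
      using u w by (auto simp: X_def)
    ultimately obtain vs es where p: "is_path (delete G X) vs es" "hd vs = u" "last vs = w"
      unfolding connected_def joined_def by blast
    have "\<forall>f\<in>edges (delete G X). f \<subseteq> C \<or> f \<inter> C = {}"
      using split by (auto simp: X_def)
    then show False using is_path_last_mem_if_edges_split[OF p(1)] p u w by auto
  qed
  then have "kappa G \<le> card X"
    using G by (intro kappa_le_card_vertex_cut) (auto simp: vertex_cut_def X_def)
  also have "\<dots> \<le> card S" using S by (auto simp: X_def intro: card_mono)
  finally show ?thesis .
qed

lemma new_edge_mem_if_kappa_gt_kappa_bar:
  assumes H: "hypergraph H" and sub: "subhypergraph H' (add_edge H e)"
    and gt: "kappa_bar H < kappa H'"
  shows "e \<in> edges H'"
proof (rule ccontr)
  assume "e \<notin> edges H'"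
  then have "subhypergraph H' H" using sub by (auto simp: subhypergraph_def)
  then show False using kappa_le_kappa_bar[OF H] gt by fastforce
qed

lemma separation_triple_verts_inter:
  assumes "separation_triple H S H1 H2"
  shows "verts H1 \<inter> verts H2 \<subseteq> S"
  using assms by (auto simp: separation_triple_def)

lemma subhypergraph_add_edge_if_induced:
  assumes sub: "subhypergraph H' (add_edge H e)" and Y: "verts H' \<subseteq> Y" and e: "e \<in> edges H'"
  shows "subhypergraph H' (add_edge_if (induced H Y) e)"
proof -
  have "\<forall>f\<in>edges H'. f \<subseteq> Y" using sub Y by (auto simp: subhypergraph_def hypergraph_def)
  then show ?thesis using sub Y e
    by (auto simp: subhypergraph_def add_edge_if_def)
qed

lemma separation_triple_subhypergraph_side:
  assumes H: "hypergraph H" and sep: "separation_triple H S H1 H2"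
    and e: "e \<subseteq> verts H1 \<or> e \<subseteq> verts H2"
    and sub: "subhypergraph H' (add_edge H e)" and gt: "card S < kappa H'"
  shows "verts H' \<subseteq> verts H1 \<or> verts H' \<subseteq> verts H2"
proof (rule ccontr)
  assume side: "\<not> ?thesis"
  obtain C where C: "component_verts (delete H S) C"
    and H1: "H1 = induced H (S \<union> C)" and H2: "H2 = induced H (S \<union> (verts H - (S \<union> C)))"
    using sep by (auto simp: separation_triple_def)
  have CS: "C \<subseteq> verts H - S" using C by (auto simp: component_verts_def)
  have finS: "finite S" using sep H
    by (auto simp: separation_triple_def min_vertex_cut_def vertex_cut_def hypergraph_def
        intro: finite_subset)
  have "f \<subseteq> C \<or> f \<inter> C = {}" if f: "f \<in> edges H'" "f \<inter> S = {}" for f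
  proof (cases "f = e")
    case True
    then show ?thesis using e f(2) H1 H2 by auto
  next
    case False
    then have "f \<in> edges H" "f \<subseteq> verts H" using f sub H by (auto simp: subhypergraph_def hypergraph_def)
    then show ?thesis
      using component_verts_edge_split[OF hypergraph_delete[OF H] C] f(2) by auto
  qed
  moreover obtain u w where "u \<in> verts H' - S" "u \<in> C" "w \<in> verts H' - S" "w \<notin> C"
    using side sub H1 H2 by (auto simp: subhypergraph_def)
  ultimately have "kappa H' \<le> card S"
    using sub finS by (intro kappa_le_card_if_edges_split) (auto simp: subhypergraph_def)
  then show False using gt by simp
qed

theorem lemma2p2:
  fixes n k r :: nat and H H1 H2 :: "'a hypergraph" and S e :: "'a set"
  assumes "k \<ge> 2" and "r \<ge> 2" and "n \<ge> k + r"
    and "card (verts H) = n"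
    and "vertex_k_maximal k r H"
    and "separation_triple H S H1 H2"
    and "e \<subseteq> verts H1 \<or> e \<subseteq> verts H2" and "card e = r" and "e \<notin> edges H"
  shows "\<forall>H'. subhypergraph H' (add_edge H e) \<and> kappa H' \<ge> k + 1 \<longrightarrow>
           (verts H' \<subseteq> verts H1 \<or> verts H' \<subseteq> verts H2)
         \<and> (subhypergraph H' (add_edge_if H1 e) \<or> subhypergraph H' (add_edge_if H2 e))
         \<and> (e \<subseteq> verts H1 \<and> \<not> e \<subseteq> S \<longrightarrow> subhypergraph H' (add_edge_if H1 e))
         \<and> (e \<subseteq> verts H2 \<and> \<not> e \<subseteq> S \<longrightarrow> subhypergraph H' (add_edge_if H2 e))"
proof (intro allI impI)
  fix H' assume "subhypergraph H' (add_edge H e) \<and> kappa H' \<ge> k + 1"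
  then have sub: "subhypergraph H' (add_edge H e)" and kH': "k < kappa H'" by auto
  have H: "hypergraph H" and kbar: "kappa_bar H \<le> k"
    using assms(5) by (auto simp: vertex_k_maximal_def uniform_def)
  have "card S \<le> k"
    using kappa_eq_card_min_vertex_cut[OF H] kappa_le_kappa_bar[OF H] assms(6) kbar H
    by (fastforce simp: separation_triple_def subhypergraph_def)
  then have side: "verts H' \<subseteq> verts H1 \<or> verts H' \<subseteq> verts H2"
    using separation_triple_subhypergraph_side[OF H assms(6,7) sub] kH' by simp
  have e: "e \<in> edges H'" using new_edge_mem_if_kappa_gt_kappa_bar[OF H sub] kbar kH' by simp
  then have "e \<subseteq> verts H'" using sub by (auto simp: subhypergraph_def hypergraph_def)
  moreover have "subhypergraph H' (add_edge_if H1 e)" if "verts H' \<subseteq> verts H1"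
    using that subhypergraph_add_edge_if_induced[OF sub _ e] assms(6)
    by (auto simp: separation_triple_def)
  moreover have "subhypergraph H' (add_edge_if H2 e)" if "verts H' \<subseteq> verts H2"
    using that subhypergraph_add_edge_if_induced[OF sub _ e] assms(6)
    by (auto simp: separation_triple_def)
  ultimately show "(verts H' \<subseteq> verts H1 \<or> verts H' \<subseteq> verts H2)
         \<and> (subhypergraph H' (add_edge_if H1 e) \<or> subhypergraph H' (add_edge_if H2 e))
         \<and> (e \<subseteq> verts H1 \<and> \<not> e \<subseteq> S \<longrightarrow> subhypergraph H' (add_edge_if H1 e))
         \<and> (e \<subseteq> verts H2 \<and> \<not> e \<subseteq> S \<longrightarrow> subhypergraph H' (add_edge_if H2 e))"
    using side separation_triple_verts_inter[OF assms(6)] by blast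
qed

end
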